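(* Let $\delta_B,\delta_R\ge1$ be integers, let $T_0(\lambda)$ be as in the context, and let $\mathcal C=\{(\lambda,\mu)\in\mathbb C^2:\ \mu\text{ is an eigenvalue of }T_0(\lambda)\}$. Then the map $(\lambda,\mu)\mapsto\mu$ takes $\mathcal C$ into $\mathbb C\setminus\{0\}$ and is surjective onto $\mathbb C\setminus\{0\}$. Moreover, near any $\lambda_0$ at which $T_0(\lambda_0)$ has two distinct eigenvalues, each locally defined analytic eigenvalue function $\mu=\Psi(\lambda)$ satisfies $\Psi'(\lambda_0)\neq0$ unless $\cos(\omega_0)\sin(\omega_0)/\omega_0=0$, where $\omega_0=\sqrt{\lambda_0}$.
   Context: With $\omega=\sqrt\lambda$, define the entire functions $c=\cos\omega$, $c'=-\omega\sin\omega$, $s=\sin\omega/\omega$, $s'=\cos\omega$, and $M_0=\begin{pmatrix}c&s\\c'&s'\end{pmatrix}$, $J_B=\operatorname{diag}(1,1/\delta_B)$, $J_R=\operatorname{diag}(1,1/\delta_R)$, $T_0(\lambda)=J_RM_0J_BM_0$. Then $\det T_0=1/(\delta_B\delta_R)$ and $\operatorname{tr}T_0(\lambda)=\cos^2\omega\,(1+\frac1{\delta_B})(1+\frac1{\delta_R})-(\frac1{\delta_R}+\frac1{\delta_B})$; its eigenvalues $\mu^\pm$ satisfy $\mu^+\mu^-=1/(\delta_B\delta_R)$. The expression $\cos(\omega)\sin(\omega)/\omega$ is an entire function of $\lambda$. *)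

theory Defs
  imports "HOL-Analysis.Analysis"
begin

text \<open>omega = csqrt lambda; the functions below are the entire functions of lambda
  from the paper (s is extended by its limit 1 at lambda = 0).\<close>

definition c0 :: "complex \<Rightarrow> complex" where
  "c0 z = cos (csqrt z)"

definition c0' :: "complex \<Rightarrow> complex" where
  "c0' z = - csqrt z * sin (csqrt z)"

definition s0 :: "complex \<Rightarrow> complex" where
  "s0 z = (if z = 0 then 1 else sin (csqrt z) / csqrt z)"

definition s0' :: "complex \<Rightarrow> complex" where
  "s0' z = cos (csqrt z)"

definition M0 :: "complex \<Rightarrow> complex^2^2" where
  "M0 z = vector [vector [c0 z, s0 z], vector [c0' z, s0' z]]"

definition Jmat :: "nat \<Rightarrow> complex^2^2" where
  "Jmat \<delta> = vector [vector [1, 0], vector [0, 1 / of_nat \<delta>]]"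

definition T0 :: "nat \<Rightarrow> nat \<Rightarrow> complex \<Rightarrow> complex^2^2" where
  "T0 \<delta>B \<delta>R z = Jmat \<delta>R ** M0 z ** Jmat \<delta>B ** M0 z"

definition is_eigenvalue :: "complex^2^2 \<Rightarrow> complex \<Rightarrow> bool" where
  "is_eigenvalue A \<mu> \<longleftrightarrow> (\<exists>v. v \<noteq> 0 \<and> A *v v = \<mu> *s v)"

definition curveC :: "nat \<Rightarrow> nat \<Rightarrow> (complex \<times> complex) set" where
  "curveC \<delta>B \<delta>R = {(z, \<mu>). is_eigenvalue (T0 \<delta>B \<delta>R z) \<mu>}"

end

theory Submission
  imports Defs
begin

text \<open>Since det T0 = 1/(\<delta>B \<delta>R) is a nonzero constant, \<mu> is an eigenvalue of T0 \<lambda>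
  iff \<mu> \<noteq> 0 and \<mu> + det T0 / \<mu> = tr T0 \<lambda>, and tr T0 \<lambda> is an affine function of cos(\<omega>)^2
  with nonzero slope. As cos(\<omega>)^2 takes every complex value, every \<mu> \<noteq> 0 occurs.
  Differentiating \<Psi> + det T0 / \<Psi> = tr T0 along an analytic branch \<Psi> gives
  \<Psi>' (1 - det T0 / \<Psi>^2) = d/d\<lambda> tr T0, a nonzero multiple of
  d/d\<lambda> cos(\<omega>)^2 = - cos \<omega> sin \<omega> / \<omega>.\<close>

lemma is_eigenvalue_iff_det:
  "is_eigenvalue A \<mu> \<longleftrightarrow> det (A - mat \<mu>) = 0"
proof -
  have "(A - mat \<mu>) *v v = A *v v - \<mu> *s v" for v :: "complex^2"
    by (simp add: vec_eq_iff matrix_vector_mult_def mat_def sum_2 forall_2 algebra_simps)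
  then have "is_eigenvalue A \<mu> \<longleftrightarrow> \<not> (\<forall>v. (A - mat \<mu>) *v v = 0 \<longrightarrow> v = 0)"
    by (auto simp: is_eigenvalue_def)
  also have "\<dots> \<longleftrightarrow> det (A - mat \<mu>) = 0"
    by (simp add: matrix_left_invertible_ker[symmetric] invertible_left_inverse[symmetric] invertible_det_nz)
  finally show ?thesis .
qed

lemma is_eigenvalue_iff_char_poly:
  "is_eigenvalue A \<mu> \<longleftrightarrow> \<mu>^2 - trace A * \<mu> + det A = 0"
  unfolding is_eigenvalue_iff_det det_2 trace_def sum_2
  by (simp add: mat_def algebra_simps power2_eq_square)

lemma is_eigenvalue_iff_add_det_divide:
  assumes "det A \<noteq> 0"
  shows "is_eigenvalue A \<mu> \<longleftrightarrow> \<mu> \<noteq> 0 \<and> \<mu> + det A / \<mu> = trace A"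
  unfolding is_eigenvalue_iff_char_poly using assms
  by (cases "\<mu> = 0") (auto simp: field_simps power2_eq_square)

lemma det_M0: "det (M0 z) = 1"
proof (cases "z = 0")
  case False
  then show ?thesis using sin_squared_eq[of "csqrt z"]
    by (simp add: det_2 M0_def c0_def s0_def s0'_def c0'_def field_simps power2_eq_square)
qed (simp add: det_2 M0_def c0_def s0_def s0'_def c0'_def)

lemma det_Jmat: "det (Jmat \<delta>) = 1 / of_nat \<delta>"
  by (simp add: det_2 Jmat_def)

lemma det_T0: "det (T0 \<delta>B \<delta>R z) = 1 / (of_nat \<delta>B * of_nat \<delta>R)"
  by (simp add: T0_def det_mul det_M0 det_Jmat)

lemma trace_T0:
  "trace (T0 \<delta>B \<delta>R z)
     = (1 + 1 / of_nat \<delta>B) * (1 + 1 / of_nat \<delta>R) * c0 z ^ 2 - (1 / of_nat \<delta>B + 1 / of_nat \<delta>R)"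
proof -
  have s0': "s0' z = c0 z"
    by (simp add: s0'_def c0_def)
  have "c0 z ^ 2 = 1 + c0' z * s0 z"
    using det_M0[of z] by (simp add: det_2 M0_def s0' power2_eq_square algebra_simps)
  then show ?thesis
    by (simp add: trace_def sum_2 T0_def M0_def Jmat_def matrix_matrix_mult_def vector_def s0'
        algebra_simps power2_eq_square)
qed

lemma differentiable_sqrt_branch_at:
  fixes z :: complex
  assumes "z \<noteq> 0"
  obtains g where "(g has_field_derivative inverse (2 * g z)) (at z)" "\<And>w. g w ^ 2 = w"
proof (cases "z \<in> \<real>\<^sub>\<le>\<^sub>0")
  case False
  then show ?thesis using that[of csqrt] has_field_derivative_csqrt by simp
next
  case True
  then have "- z \<notin> \<real>\<^sub>\<le>\<^sub>0"
    using assms by (auto simp: complex_nonpos_Reals_iff complex_eq_iff)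
  show ?thesis
  proof (rule that)
    have "((\<lambda>w. \<i> * csqrt (- w)) has_field_derivative \<i> * (- 1 / (2 * csqrt (- z)))) (at z)"
      using \<open>- z \<notin> \<real>\<^sub>\<le>\<^sub>0\<close> by (auto intro!: derivative_eq_intros)
    moreover have "\<i> * (- 1 / (2 * csqrt (- z))) = inverse (2 * (\<i> * csqrt (- z)))"
      using assms by (simp add: field_simps)
    ultimately show "((\<lambda>w. \<i> * csqrt (- w)) has_field_derivative inverse (2 * (\<i> * csqrt (- z)))) (at z)"
      by metis
    show "(\<i> * csqrt (- w)) ^ 2 = w" for w
      by (simp add: power_mult_distrib)
  qed
qed

text \<open>csqrt jumps across the negative real axis, but f \<circ> csqrt does not when f is even,
  so it can be differentiated along any local branch of the square root.\<close>

lemma has_field_derivative_even_comp_csqrt: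
  assumes even: "\<And>w. f (- w) = f w"
    and f': "\<And>w. (f has_field_derivative f' w) (at w)"
    and "z \<noteq> 0"
  shows "((\<lambda>z. f (csqrt z)) has_field_derivative f' (csqrt z) / (2 * csqrt z)) (at z)"
proof -
  obtain g where g': "(g has_field_derivative inverse (2 * g z)) (at z)" and sq: "\<And>w. g w ^ 2 = w"
    using differentiable_sqrt_branch_at[OF \<open>z \<noteq> 0\<close>] by blast
  have odd: "f' (- w) = - f' w" for w
  proof -
    have "((\<lambda>w. f (- w)) has_field_derivative f' (- w) * - 1) (at w)"
      by (rule DERIV_chain2[OF f' DERIV_minus[OF DERIV_ident]])
    then have "(f has_field_derivative - f' (- w)) (at w)"
      using even by simp
    then show ?thesis
      using DERIV_unique[OF f'] by fastforce
  qed
  have branch: "csqrt w = g w \<or> csqrt w = - g w" for w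
    using sq[of w] power2_eq_iff[of "csqrt w" "g w"] by simp
  have "((\<lambda>w. f (g w)) has_field_derivative f' (g z) * inverse (2 * g z)) (at z)"
    by (rule DERIV_chain2[OF f' g'])
  also have "f' (g z) * inverse (2 * g z) = f' (csqrt z) / (2 * csqrt z)"
    using branch[of z] odd by (auto simp: field_simps)
  also have "(\<lambda>w. f (g w)) = (\<lambda>w. f (csqrt w))"
    using branch even by metis
  finally show ?thesis .
qed

lemma has_field_derivative_c0_sq_at_0:
  "((\<lambda>z. c0 z ^ 2) has_field_derivative -1) (at 0)"
proof -
  have sinc: "((\<lambda>w. sin w / w) \<longlongrightarrow> 1) (at (0::complex))"
    using DERIV_sin[of 0] by (simp add: has_field_derivative_iff)
  have "((\<lambda>x. norm (csqrt x)) \<longlongrightarrow> 0) (at (0::complex))"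
    using tendsto_real_sqrt[OF tendsto_norm[OF tendsto_ident_at, of 0 UNIV]] by simp
  then have "(csqrt \<longlongrightarrow> 0) (at 0)"
    using tendsto_norm_zero_iff by blast
  then have "filterlim csqrt (at 0) (at (0::complex))"
    by (auto simp: filterlim_at eventually_at_filter)
  from filterlim_compose[OF sinc this]
  have "((\<lambda>z. sin (csqrt z) / csqrt z) \<longlongrightarrow> 1) (at 0)" .
  then have "((\<lambda>z. - ((sin (csqrt z) / csqrt z) ^ 2)) \<longlongrightarrow> - (1 ^ 2)) (at 0)"
    by (intro tendsto_intros)
  moreover have "\<forall>\<^sub>F z in at 0. - ((sin (csqrt z) / csqrt z) ^ 2) = (c0 z ^ 2 - c0 0 ^ 2) / (z - 0)"
    using sin_squared_eq
    by (auto simp: eventually_at_filter c0_def power_divide field_simps)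
  ultimately have "((\<lambda>z. (c0 z ^ 2 - c0 0 ^ 2) / (z - 0)) \<longlongrightarrow> - 1) (at 0)"
    by (simp add: Lim_transform_eventually)
  then show ?thesis
    by (simp add: has_field_derivative_iff)
qed

lemma has_field_derivative_c0_sq:
  "((\<lambda>z. c0 z ^ 2) has_field_derivative - (c0 z * s0 z)) (at z)"
proof (cases "z = 0")
  case True
  then show ?thesis
    using has_field_derivative_c0_sq_at_0 by (simp add: c0_def s0_def)
next
  case False
  have "((\<lambda>z. cos (csqrt z) ^ 2) has_field_derivative
          (2 * cos (csqrt z) * - sin (csqrt z)) / (2 * csqrt z)) (at z)"
    by (rule has_field_derivative_even_comp_csqrt[OF _ _ False]) (auto intro!: derivative_eq_intros)
  then show ?thesis
    using False by (simp add: c0_def s0_def)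
qed

lemma has_field_derivative_trace_T0:
  "((\<lambda>z. trace (T0 \<delta>B \<delta>R z)) has_field_derivative
     - ((1 + 1 / of_nat \<delta>B) * (1 + 1 / of_nat \<delta>R) * (c0 z * s0 z))) (at z)"
  unfolding trace_T0
  using DERIV_diff[OF DERIV_cmult[OF has_field_derivative_c0_sq] DERIV_const] by simp

lemma exists_cos_csqrt_eq: "\<exists>z. cos (csqrt z) = b"
proof
  have "csqrt (Arccos b ^ 2) = Arccos b \<or> csqrt (Arccos b ^ 2) = - Arccos b"
    using power2_eq_iff[of "csqrt (Arccos b ^ 2)" "Arccos b"] by simp
  then show "cos (csqrt (Arccos b ^ 2)) = b"
    by auto
qed

lemma one_add_inverse_of_nat_nonzero: "1 + 1 / of_nat n \<noteq> (0 :: 'a::field_char_0)"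
proof (cases "n = 0")
  case False
  then have "1 + 1 / of_nat n = (of_nat (Suc n) / of_nat n :: 'a)"
    by (simp add: field_simps)
  then show ?thesis
    using False by (simp del: of_nat_Suc)
qed simp

lemma surj_trace_T0: "\<exists>z. trace (T0 \<delta>B \<delta>R z) = t"
proof -
  define K :: complex where "K = (1 + 1 / of_nat \<delta>B) * (1 + 1 / of_nat \<delta>R)"
  define L :: complex where "L = 1 / of_nat \<delta>B + 1 / of_nat \<delta>R"
  have "K \<noteq> 0"
    by (simp add: K_def one_add_inverse_of_nat_nonzero)
  obtain z where "cos (csqrt z) = csqrt ((t + L) / K)"
    using exists_cos_csqrt_eq by blast
  then have "K * c0 z ^ 2 - L = t"
    using \<open>K \<noteq> 0\<close> by (simp add: c0_def)
  then show ?thesis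
    unfolding trace_T0 K_def L_def by blast
qed

lemma has_field_derivative_add_divide_eq:
  fixes \<Psi> G :: "complex \<Rightarrow> complex"
  assumes "open S" "z0 \<in> S" "\<Psi> holomorphic_on S"
    and "\<And>z. z \<in> S \<Longrightarrow> \<Psi> z \<noteq> 0 \<and> \<Psi> z + D / \<Psi> z = G z"
    and "(G has_field_derivative G') (at z0)"
  shows "G' = deriv \<Psi> z0 * (1 - D / \<Psi> z0 ^ 2)"
proof -
  have "(\<Psi> has_field_derivative deriv \<Psi> z0) (at z0)"
    using holomorphic_derivI[OF assms(3,1,2)] .
  then have "((\<lambda>z. \<Psi> z + D / \<Psi> z) has_field_derivative deriv \<Psi> z0 * (1 - D / \<Psi> z0 ^ 2)) (at z0)"
    using assms(2,4) by (auto intro!: derivative_eq_intros simp: field_simps power2_eq_square)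
  then have "(G has_field_derivative deriv \<Psi> z0 * (1 - D / \<Psi> z0 ^ 2)) (at z0)"
    by (rule has_field_derivative_transform_within_open[OF _ assms(1,2)]) (use assms(4) in auto)
  then show ?thesis
    using DERIV_unique assms(5) by blast
qed

theorem lemma5p3:
  fixes \<delta>B \<delta>R :: nat
  assumes "\<delta>B \<ge> 1" and "\<delta>R \<ge> 1"
  shows "snd ` curveC \<delta>B \<delta>R = - {0}
    \<and> (\<forall>z0 S \<Psi>. (\<exists>\<mu>1 \<mu>2. \<mu>1 \<noteq> \<mu>2 \<and> is_eigenvalue (T0 \<delta>B \<delta>R z0) \<mu>1
                              \<and> is_eigenvalue (T0 \<delta>B \<delta>R z0) \<mu>2)
          \<and> open S \<and> z0 \<in> S \<and> \<Psi> holomorphic_on S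
          \<and> (\<forall>z\<in>S. is_eigenvalue (T0 \<delta>B \<delta>R z) (\<Psi> z))
          \<longrightarrow> deriv \<Psi> z0 \<noteq> 0 \<or> c0 z0 * s0 z0 = 0)"
proof -
  define D :: complex where "D = 1 / (of_nat \<delta>B * of_nat \<delta>R)"
  have eig: "is_eigenvalue (T0 \<delta>B \<delta>R z) \<mu> \<longleftrightarrow> \<mu> \<noteq> 0 \<and> \<mu> + D / \<mu> = trace (T0 \<delta>B \<delta>R z)"
    for z \<mu>
    using is_eigenvalue_iff_add_det_divide[of "T0 \<delta>B \<delta>R z"] assms by (simp add: det_T0 D_def)
  have "snd ` curveC \<delta>B \<delta>R = - {0}"
  proof (intro equalityI subsetI)
    fix \<mu> :: complex
    assume "\<mu> \<in> - {0}"
    moreover obtain z where "trace (T0 \<delta>B \<delta>R z) = \<mu> + D / \<mu>"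
      using surj_trace_T0 by blast
    ultimately have "(z, \<mu>) \<in> curveC \<delta>B \<delta>R"
      by (simp add: curveC_def eig)
    then show "\<mu> \<in> snd ` curveC \<delta>B \<delta>R"
      by force
  qed (auto simp: curveC_def eig)
  txt \<open>The two distinct eigenvalues at z0 only serve to make an analytic branch \<Psi> exist;
    the conclusion holds for every branch.\<close>
  moreover have "deriv \<Psi> z0 \<noteq> 0 \<or> c0 z0 * s0 z0 = 0"
    if "open S" "z0 \<in> S" "\<Psi> holomorphic_on S" "\<forall>z\<in>S. is_eigenvalue (T0 \<delta>B \<delta>R z) (\<Psi> z)"
    for z0 S and \<Psi> :: "complex \<Rightarrow> complex"
  proof -
    have "- ((1 + 1 / of_nat \<delta>B) * (1 + 1 / of_nat \<delta>R) * (c0 z0 * s0 z0))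
        = deriv \<Psi> z0 * (1 - D / \<Psi> z0 ^ 2)"
      using that
      by (intro has_field_derivative_add_divide_eq[where G = "\<lambda>z. trace (T0 \<delta>B \<delta>R z)"]
          has_field_derivative_trace_T0) (auto simp: eig)
    then show ?thesis
      using one_add_inverse_of_nat_nonzero[where 'a = complex] by auto
  qed
  ultimately show ?thesis
    by blast
qed

end
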